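(* Let $G$ be a finite connected simple graph, $H$ a finite tree, and $\Delta$ a triangulation of $G\times H$. Then every Cartier divisor on $\Delta$ is linearly equivalent (i.e. differs by a principal divisor) to a Cartier divisor that vanishes on every diagonal edge of $\Delta$. The same holds with the roles of $G$ and $H$ exchanged.
   Context: Triangulated product: $\Delta$ has vertex set $V(G)\times V(H)$; horizontal edges $\{(a,b),(x,b)\}$ ($ax\in E(G)$, $b\in V(H)$); vertical edges $\{(a,b),(a,y)\}$ ($a\in V(G)$, $by\in E(H)$); for each $ax\in E(G)$, $by\in E(H)$ the square $(a,b),(x,b),(x,y),(a,y)$ is split by one chosen diagonal edge into two triangles. For a triangle $\sigma$, $\mathrm{diag}(\sigma)$ is its diagonal edge. $\alpha(e,v)=1$ if $v\in e$, $e$ diagonal; $\alpha(e,v)=|\{\text{triangles }\sigma\supset e: v\notin\mathrm{diag}(\sigma)\}|$ if $v\in e$, $e$ not diagonal; $0$ if $v\notin e$. For $\phi:V(\Delta)\to\mathbb{Z}$, $\operatorname{Div}(\phi)=\sum_{r}\big(\sum_{\sigma\supset r}\phi(\sigma\setminus r)-\sum_{u\in r}\alpha(r,u)\phi(u)\big)[r]$; principal divisors are those of this form. A divisor $D$ on $\Delta$ (formal $\mathbb{Z}$-combination of edges) is Cartier if for every vertex $v$ some $\phi$ satisfies $D(r)=\operatorname{Div}(\phi)(r)$ for all edges $r\ni v$. *)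

theory Defs
  imports Main
begin

definition simple_graph :: "'a set \<Rightarrow> 'a set set \<Rightarrow> bool" where
  "simple_graph V E \<longleftrightarrow> finite V \<and>
     (\<forall>e\<in>E. \<exists>a x. e = {a, x} \<and> a \<noteq> x \<and> a \<in> V \<and> x \<in> V)"

definition adj_rel :: "'a set set \<Rightarrow> ('a \<times> 'a) set" where
  "adj_rel E = {(a, x). {a, x} \<in> E}"

definition connected_graph :: "'a set \<Rightarrow> 'a set set \<Rightarrow> bool" where
  "connected_graph V E \<longleftrightarrow> V \<noteq> {} \<and> (\<forall>u\<in>V. \<forall>v\<in>V. (u, v) \<in> (adj_rel E)\<^sup>*)"

definition has_cycle :: "'a set \<Rightarrow> 'a set set \<Rightarrow> bool" where
  "has_cycle V E \<longleftrightarrow> (\<exists>vs. length vs \<ge> 3 \<and> distinct vs \<and> set vs \<subseteq> V \<and>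
      (\<forall>i. Suc i < length vs \<longrightarrow> {vs ! i, vs ! Suc i} \<in> E) \<and> {last vs, hd vs} \<in> E)"

definition tree_graph :: "'a set \<Rightarrow> 'a set set \<Rightarrow> bool" where
  "tree_graph V E \<longleftrightarrow> connected_graph V E \<and> \<not> has_cycle V E"

definition hor_edges :: "'a set set \<Rightarrow> 'b set \<Rightarrow> ('a \<times> 'b) set set" where
  "hor_edges EG VH = {{(a, b), (x, b)} | a x b. {a, x} \<in> EG \<and> b \<in> VH}"

definition ver_edges :: "'a set \<Rightarrow> 'b set set \<Rightarrow> ('a \<times> 'b) set set" where
  "ver_edges VG EH = {{(a, b), (a, y)} | a b y. a \<in> VG \<and> {b, y} \<in> EH}"

text \<open>A triangulation is given by its set Dg of chosen diagonals: for each square exactly one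
  of its two diagonals is chosen.\<close>
definition is_triangulation :: "'a set set \<Rightarrow> 'b set set \<Rightarrow> ('a \<times> 'b) set set \<Rightarrow> bool" where
  "is_triangulation EG EH Dg \<longleftrightarrow>
     Dg \<subseteq> {{(a, b), (x, y)} | a x b y. {a, x} \<in> EG \<and> {b, y} \<in> EH} \<and>
     (\<forall>a x b y. {a, x} \<in> EG \<longrightarrow> {b, y} \<in> EH \<longrightarrow>
        ({(a, b), (x, y)} \<in> Dg \<longleftrightarrow> {(x, b), (a, y)} \<notin> Dg))"

definition tri_vertices :: "'a set \<Rightarrow> 'b set \<Rightarrow> ('a \<times> 'b) set" where
  "tri_vertices VG VH = VG \<times> VH"

definition tri_edges ::
  "'a set \<Rightarrow> 'a set set \<Rightarrow> 'b set \<Rightarrow> 'b set set \<Rightarrow> ('a \<times> 'b) set set \<Rightarrow> ('a \<times> 'b) set set" where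
  "tri_edges VG EG VH EH Dg = hor_edges EG VH \<union> ver_edges VG EH \<union> Dg"

text \<open>The triangles: the square (a,b),(x,b),(x,y),(a,y) with diagonal {(a,b),(x,y)} is split
  into the two triangles obtained by adding (x,b) resp. (a,y) to the diagonal.\<close>
definition triangles ::
  "'a set set \<Rightarrow> 'b set set \<Rightarrow> ('a \<times> 'b) set set \<Rightarrow> ('a \<times> 'b) set set" where
  "triangles EG EH Dg = {insert c {(a, b), (x, y)} | a x b y c.
      {a, x} \<in> EG \<and> {b, y} \<in> EH \<and> {(a, b), (x, y)} \<in> Dg \<and> c \<in> {(x, b), (a, y)}}"

definition diag :: "('a \<times> 'b) set set \<Rightarrow> ('a \<times> 'b) set \<Rightarrow> ('a \<times> 'b) set" where
  "diag Dg \<sigma> = (THE e. e \<in> Dg \<and> e \<subseteq> \<sigma>)"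

definition alpha ::
  "'a set set \<Rightarrow> 'b set set \<Rightarrow> ('a \<times> 'b) set set \<Rightarrow> ('a \<times> 'b) set \<Rightarrow> 'a \<times> 'b \<Rightarrow> nat" where
  "alpha EG EH Dg e v =
     (if v \<notin> e then 0
      else if e \<in> Dg then 1
      else card {\<sigma> \<in> triangles EG EH Dg. e \<subseteq> \<sigma> \<and> v \<notin> diag Dg \<sigma>})"

definition is_divisor ::
  "'a set \<Rightarrow> 'a set set \<Rightarrow> 'b set \<Rightarrow> 'b set set \<Rightarrow> ('a \<times> 'b) set set \<Rightarrow> (('a \<times> 'b) set \<Rightarrow> int) \<Rightarrow> bool" where
  "is_divisor VG EG VH EH Dg D \<longleftrightarrow> (\<forall>r. r \<notin> tri_edges VG EG VH EH Dg \<longrightarrow> D r = 0)"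

definition Div ::
  "'a set \<Rightarrow> 'a set set \<Rightarrow> 'b set \<Rightarrow> 'b set set \<Rightarrow> ('a \<times> 'b) set set \<Rightarrow> ('a \<times> 'b \<Rightarrow> int)
     \<Rightarrow> ('a \<times> 'b) set \<Rightarrow> int" where
  "Div VG EG VH EH Dg \<phi> r =
     (if r \<in> tri_edges VG EG VH EH Dg then
        (\<Sum>\<sigma>\<in>{\<sigma> \<in> triangles EG EH Dg. r \<subseteq> \<sigma>}. \<phi> (the_elem (\<sigma> - r)))
        - (\<Sum>u\<in>r. int (alpha EG EH Dg r u) * \<phi> u)
      else 0)"

definition is_cartier ::
  "'a set \<Rightarrow> 'a set set \<Rightarrow> 'b set \<Rightarrow> 'b set set \<Rightarrow> ('a \<times> 'b) set set \<Rightarrow> (('a \<times> 'b) set \<Rightarrow> int) \<Rightarrow> bool" where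
  "is_cartier VG EG VH EH Dg D \<longleftrightarrow>
     is_divisor VG EG VH EH Dg D \<and>
     (\<forall>v\<in>tri_vertices VG VH. \<exists>\<phi>. \<forall>r\<in>tri_edges VG EG VH EH Dg. v \<in> r \<longrightarrow>
         D r = Div VG EG VH EH Dg \<phi> r)"

end

theory Submission
  imports Defs "HOL-Library.Function_Algebras"
begin

text \<open>For a potential \<open>\<phi>\<close>, the divisor \<open>D + Div \<phi>\<close> vanishes on the diagonal of the square
  \<open>(a, b), (x, b), (x, y), (a, y)\<close> iff the mixed difference
  \<open>\<phi> (x, y) - \<phi> (x, b) - \<phi> (a, y) + \<phi> (a, b)\<close> equals the value of \<open>D\<close> on that diagonal,
  taken with a sign according to which diagonal was chosen. Near \<open>(a, b)\<close> the Cartier divisor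
  \<open>D\<close> is principal, so the total of \<open>D\<close> over the edges from \<open>(a, b)\<close> into a neighbouring column
  does not depend on the column. Hence, for each vertex \<open>b\<close> of \<open>H\<close>, the sum of the signed diagonal
  values over the edges of \<open>H\<close> at \<open>b\<close> is a coboundary on \<open>G\<close>. When \<open>H\<close> is a forest, peeling
  off leaves splits this into one coboundary per edge of \<open>H\<close>, and integrating these along the
  forest yields \<open>\<phi>\<close>. The case in which \<open>G\<close> is the forest follows by transposing the product.\<close>

section \<open>Simple graphs and forests\<close>

lemma simple_graph_edge:
  assumes "simple_graph V E" "{a, x} \<in> E"
  shows "a \<noteq> x \<and> a \<in> V \<and> x \<in> V"
  using assms unfolding simple_graph_def by (metis doubleton_eq_iff)

lemma simple_graph_finite_edges:
  assumes "simple_graph V E"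
  shows "finite E"
proof -
  have "E \<subseteq> Pow V"
    using assms unfolding simple_graph_def by auto
  with assms show ?thesis
    unfolding simple_graph_def by (meson finite_Pow_iff finite_subset)
qed

lemma simple_graph_finite_neighbours:
  assumes "simple_graph V E"
  shows "finite {y. {b, y} \<in> E}"
proof (rule finite_subset)
  show "{y. {b, y} \<in> E} \<subseteq> V"
    using simple_graph_edge[OF assms] by blast
qed (use assms in \<open>simp add: simple_graph_def\<close>)

lemma simple_graph_subset: "simple_graph V E \<Longrightarrow> E' \<subseteq> E \<Longrightarrow> simple_graph V E'"
  unfolding simple_graph_def by blast

lemma has_cycle_mono: "has_cycle V E' \<Longrightarrow> E' \<subseteq> E \<Longrightarrow> has_cycle V E"
  unfolding has_cycle_def by blast

definition graph_path :: "'a set \<Rightarrow> 'a set set \<Rightarrow> 'a list \<Rightarrow> bool" where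
  "graph_path V E vs \<longleftrightarrow> distinct vs \<and> set vs \<subseteq> V \<and>
     (\<forall>i. Suc i < length vs \<longrightarrow> {vs ! i, vs ! Suc i} \<in> E)"

lemma graph_path_length_le:
  assumes "finite V" "graph_path V E vs"
  shows "length vs \<le> card V"
  using assms card_mono distinct_card unfolding graph_path_def by metis

lemma graph_path_snoc:
  assumes "graph_path V E vs" "vs \<noteq> []" "y \<in> V" "y \<notin> set vs" "{last vs, y} \<in> E"
  shows "graph_path V E (vs @ [y])"
  unfolding graph_path_def
proof (intro conjI allI impI)
  fix i assume i: "Suc i < length (vs @ [y])"
  show "{(vs @ [y]) ! i, (vs @ [y]) ! Suc i} \<in> E"
  proof (cases "Suc i < length vs")
    case True
    then show ?thesis using assms(1) by (simp add: graph_path_def nth_append)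
  next
    case False
    with i have "i = length vs - 1" by simp
    with assms(2,5) show ?thesis by (simp add: nth_append last_conv_nth)
  qed
qed (use assms in \<open>auto simp: graph_path_def\<close>)

lemma graph_path_back_edge_cycle:
  assumes "graph_path V E vs" "j + 2 < length vs" "{last vs, vs ! j} \<in> E"
  shows "has_cycle V E"
  unfolding has_cycle_def
proof (intro exI conjI allI impI)
  let ?ws = "drop j vs"
  show "3 \<le> length ?ws" "distinct ?ws" "set ?ws \<subseteq> V"
    using assms(1,2) set_drop_subset[of j vs] by (auto simp: graph_path_def)
  show "{last ?ws, hd ?ws} \<in> E"
    using assms(2,3) by (simp add: hd_drop_conv_nth)
  fix i assume "Suc i < length ?ws"
  then show "{?ws ! i, ?ws ! Suc i} \<in> E"
    using assms(1) by (simp add: graph_path_def add.commute[of j])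
qed

lemma longest_graph_path:
  assumes sg: "simple_graph V E" and "E \<noteq> {}"
  shows "\<exists>vs. graph_path V E vs \<and> 2 \<le> length vs \<and>
           (\<forall>ws. graph_path V E ws \<longrightarrow> length ws \<le> length vs)"
proof -
  let ?P = "\<lambda>vs. graph_path V E vs \<and> 2 \<le> length vs"
  have finV: "finite V" using sg by (simp add: simple_graph_def)
  obtain e where "e \<in> E" using \<open>E \<noteq> {}\<close> by blast
  with sg obtain u w where uw: "{u, w} \<in> E"
    unfolding simple_graph_def by metis
  have "?P [u, w]"
    using simple_graph_edge[OF sg uw] uw by (auto simp: graph_path_def less_Suc_eq)
  moreover have "\<forall>vs. ?P vs \<longrightarrow> length vs < Suc (card V)"
    using graph_path_length_le[OF finV] by (auto simp: less_Suc_eq_le)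
  ultimately obtain vs where vs: "?P vs" and longest: "\<And>ws. ?P ws \<Longrightarrow> length ws \<le> length vs"
    using Lattices_Big.ex_has_greatest_nat[of ?P "[u, w]" length "Suc (card V)"] by auto
  moreover have "length ws \<le> length vs" if "graph_path V E ws" for ws
    using that longest[of ws] vs by (cases "2 \<le> length ws") auto
  ultimately show ?thesis by blast
qed

lemma forest_has_leaf:
  assumes sg: "simple_graph V E" and acyclic: "\<not> has_cycle V E" and "E \<noteq> {}"
  obtains l p where "{l, p} \<in> E" "\<And>y. {l, y} \<in> E \<Longrightarrow> y = p"
proof -
  obtain vs where path: "graph_path V E vs" and len: "2 \<le> length vs"
    and longest: "\<And>ws. graph_path V E ws \<Longrightarrow> length ws \<le> length vs"
    using longest_graph_path[OF sg \<open>E \<noteq> {}\<close>] by blast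
  define n where "n = length vs"
  define l where "l = vs ! (n - 1)"
  define p where "p = vs ! (n - 2)"
  have ne: "vs \<noteq> []" using len by auto
  then have last_vs: "last vs = l" by (simp add: l_def n_def last_conv_nth)
  have "Suc (n - 2) < n" "Suc (n - 2) = n - 1"
    using len by (auto simp: n_def)
  then have "{p, l} \<in> E"
    using path unfolding graph_path_def p_def l_def n_def by metis
  then have lp: "{l, p} \<in> E" by (simp add: insert_commute)
  moreover have "y = p" if ly: "{l, y} \<in> E" for y
  proof (rule ccontr)
    assume "y \<noteq> p"
    show False
    proof (cases "y \<in> set vs")
      case False
      then have "graph_path V E (vs @ [y])"
        using graph_path_snoc[OF path ne] ly simple_graph_edge[OF sg ly] last_vs by auto
      with longest[of "vs @ [y]"] show False by simp
    next
      case True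
      then obtain j where j: "j < n" "vs ! j = y" by (auto simp: in_set_conv_nth n_def)
      have "j \<noteq> n - 1" "j \<noteq> n - 2"
        using j simple_graph_edge[OF sg ly] \<open>y \<noteq> p\<close> by (auto simp: l_def p_def)
      with j have "j + 2 < length vs" unfolding n_def by linarith
      moreover have "{last vs, vs ! j} \<in> E" using ly j last_vs by simp
      ultimately show False using graph_path_back_edge_cycle[OF path] acyclic by blast
    qed
  qed
  ultimately show ?thesis using that by blast
qed

lemma forest_leaf_induct[consumes 2, case_names empty leaf]:
  assumes "simple_graph V E" "\<not> has_cycle V E"
    and "P {}"
    and "\<And>E l p. simple_graph V E \<Longrightarrow> \<not> has_cycle V E \<Longrightarrow> {l, p} \<in> E \<Longrightarrow>
           (\<And>y. {l, y} \<in> E \<Longrightarrow> y = p) \<Longrightarrow> P (E - {{l, p}}) \<Longrightarrow> P E"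
  shows "P E"
  using simple_graph_finite_edges[OF assms(1)] assms(1,2)
proof (induction E rule: finite_psubset_induct)
  case (psubset E)
  show ?case
  proof (cases "E = {}")
    case True
    with assms(3) show ?thesis by simp
  next
    case False
    then obtain l p where lp: "{l, p} \<in> E" and leaf: "\<And>y. {l, y} \<in> E \<Longrightarrow> y = p"
      using forest_has_leaf[OF psubset.prems] by blast
    have "P (E - {{l, p}})"
    proof (rule psubset.IH)
      show "E - {{l, p}} \<subset> E" using lp by blast
      show "simple_graph V (E - {{l, p}})" using simple_graph_subset[OF psubset.prems(1)] by blast
      show "\<not> has_cycle V (E - {{l, p}})" using has_cycle_mono psubset.prems(2) by blast
    qed
    then show ?thesis using assms(4)[OF psubset.prems lp] leaf by blast
  qed
qed

lemma leaf_edge_cases: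
  assumes "\<And>z. {l, z} \<in> E \<Longrightarrow> z = p" "{b, y} \<in> E"
  obtains "b = l" "y = p" | "b = p" "y = l" | "{b, y} \<in> E - {{l, p}}" "b \<noteq> l" "y \<noteq> l"
proof -
  have "b = l \<Longrightarrow> y = p" "y = l \<Longrightarrow> b = p"
    using assms(1)[of y] assms(1)[of b] assms(2) by (simp_all add: insert_commute)
  moreover have "b \<noteq> l \<Longrightarrow> y \<noteq> l \<Longrightarrow> {b, y} \<noteq> {l, p}" by (auto simp: doubleton_eq_iff)
  ultimately show ?thesis using that assms(2) by auto
qed

lemma forest_potential:
  fixes \<omega> :: "'b \<Rightarrow> 'b \<Rightarrow> 'g::ab_group_add"
  assumes "simple_graph V E" "\<not> has_cycle V E"
    and "\<And>b y. {b, y} \<in> E \<Longrightarrow> \<omega> y b = - \<omega> b y"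
  shows "\<exists>F. \<forall>b y. {b, y} \<in> E \<longrightarrow> F y - F b = \<omega> b y"
  using assms
proof (induction rule: forest_leaf_induct)
  case empty
  show ?case by simp
next
  case (leaf E l p)
  have "\<exists>F. \<forall>b y. {b, y} \<in> E - {{l, p}} \<longrightarrow> F y - F b = \<omega> b y"
    by (rule leaf.IH) (use leaf.prems in auto)
  then obtain F where F: "\<And>b y. {b, y} \<in> E - {{l, p}} \<Longrightarrow> F y - F b = \<omega> b y" by blast
  have "l \<noteq> p" using simple_graph_edge[OF leaf.hyps(1,3)] by blast
  show ?case
  proof (intro exI allI impI)
    fix b y assume "{b, y} \<in> E"
    then consider "b = l" "y = p" | "b = p" "y = l" | "{b, y} \<in> E - {{l, p}}" "b \<noteq> l" "y \<noteq> l"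
      using leaf_edge_cases[OF leaf.hyps(4)] by blast
    then show "(F(l := F p + \<omega> p l)) y - (F(l := F p + \<omega> p l)) b = \<omega> b y"
    proof cases
      case 1
      then show ?thesis using \<open>l \<noteq> p\<close> leaf.prems[OF leaf.hyps(3)] by simp
    next
      case 2
      then show ?thesis using \<open>l \<noteq> p\<close> by simp
    next
      case 3
      then show ?thesis using F by simp
    qed
  qed
qed

lemma leaf_edge_coboundary:
  fixes c :: "'b \<Rightarrow> 'b \<Rightarrow> 'a \<Rightarrow> 'a \<Rightarrow> 'g::ab_group_add" and R :: "('a \<times> 'a) set"
  assumes lp: "{l, p} \<in> E" and leaf: "\<And>y. {l, y} \<in> E \<Longrightarrow> y = p"
    and sums: "\<And>b. \<exists>T. \<forall>(a, x) \<in> R. (\<Sum>y | {b, y} \<in> E. c b y a x) = T x - T a"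
  obtains T where "\<And>a x. (a, x) \<in> R \<Longrightarrow> c l p a x = T x - T a"
proof -
  have nbrs_l: "{y. {l, y} \<in> E} = {p}"
    using lp leaf by blast
  obtain T where "\<forall>(a, x) \<in> R. (\<Sum>y | {l, y} \<in> E. c l y a x) = T x - T a"
    using sums by blast
  then have "\<And>a x. (a, x) \<in> R \<Longrightarrow> c l p a x = T x - T a"
    unfolding nbrs_l by auto
  then show ?thesis by (rule that)
qed

lemma leaf_removal_sum_coboundary:
  fixes c :: "'b \<Rightarrow> 'b \<Rightarrow> 'a \<Rightarrow> 'a \<Rightarrow> 'g::ab_group_add" and R :: "('a \<times> 'a) set"
  assumes sg: "simple_graph V E" and lp: "{l, p} \<in> E" and leaf: "\<And>y. {l, y} \<in> E \<Longrightarrow> y = p"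
    and antisym: "\<And>a x. (a, x) \<in> R \<Longrightarrow> c p l a x = - c l p a x"
    and sums: "\<And>b. \<exists>T. \<forall>(a, x) \<in> R. (\<Sum>y | {b, y} \<in> E. c b y a x) = T x - T a"
  shows "\<exists>T. \<forall>(a, x) \<in> R. (\<Sum>y | {b, y} \<in> E - {{l, p}}. c b y a x) = T x - T a"
proof -
  let ?E' = "E - {{l, p}}"
  have "l \<noteq> p" using simple_graph_edge[OF sg lp] by blast
  obtain Tl where Tl: "\<And>a x. (a, x) \<in> R \<Longrightarrow> c l p a x = Tl x - Tl a"
    using leaf_edge_coboundary[OF lp leaf sums] by blast
  consider "b = l" | "b = p" | "b \<noteq> l" "b \<noteq> p" by blast
  then show ?thesis
  proof cases
    case 1
    have "{y. {l, y} \<in> ?E'} = {}"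
      using leaf by blast
    with 1 have "(\<Sum>y | {b, y} \<in> ?E'. c b y a x) = 0" for a x
      by (simp only: sum.empty)
    then show ?thesis by (intro exI[of _ 0]) simp
  next
    case 2
    have nbrs_p': "{y. {p, y} \<in> ?E'} = {y. {p, y} \<in> E} - {l}"
      using \<open>l \<noteq> p\<close> by (auto simp: doubleton_eq_iff)
    have "finite {y. {p, y} \<in> E}"
      using simple_graph_finite_neighbours[OF sg] .
    moreover have "l \<in> {y. {p, y} \<in> E}" using lp by (simp add: insert_commute)
    moreover obtain Tp where Tp: "\<And>a x. (a, x) \<in> R \<Longrightarrow> (\<Sum>y | {p, y} \<in> E. c p y a x) = Tp x - Tp a"
      using sums[of p] by auto
    ultimately have "(\<Sum>y | {p, y} \<in> ?E'. c p y a x) = (Tp + Tl) x - (Tp + Tl) a" if "(a, x) \<in> R" for a x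
      using Tp[OF that] Tl[OF that] antisym[OF that] sum_diff1[of _ "\<lambda>y. c p y a x" l]
      unfolding nbrs_p' by simp
    then show ?thesis using 2 by blast
  next
    case 3
    then have "{y. {b, y} \<in> ?E'} = {y. {b, y} \<in> E}"
      by (auto simp: doubleton_eq_iff)
    then show ?thesis using sums[of b] by simp
  qed
qed

lemma forest_split_coboundary:
  fixes c :: "'b \<Rightarrow> 'b \<Rightarrow> 'a \<Rightarrow> 'a \<Rightarrow> 'g::ab_group_add" and R :: "('a \<times> 'a) set"
  assumes "simple_graph V E" "\<not> has_cycle V E"
    and "\<And>b y a x. {b, y} \<in> E \<Longrightarrow> (a, x) \<in> R \<Longrightarrow> c y b a x = - c b y a x"
    and "\<And>b. \<exists>T. \<forall>(a, x) \<in> R. (\<Sum>y | {b, y} \<in> E. c b y a x) = T x - T a"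
  shows "\<exists>\<Psi>. \<forall>b y. {b, y} \<in> E \<longrightarrow>
           \<Psi> y b = - \<Psi> b y \<and> (\<forall>(a, x) \<in> R. c b y a x = \<Psi> b y x - \<Psi> b y a)"
  using assms
proof (induction rule: forest_leaf_induct)
  case empty
  show ?case by simp
next
  case (leaf E l p)
  let ?E' = "E - {{l, p}}"
  have "l \<noteq> p" using simple_graph_edge[OF leaf.hyps(1,3)] by blast
  obtain Tl where Tl: "\<And>a x. (a, x) \<in> R \<Longrightarrow> c l p a x = Tl x - Tl a"
    using leaf_edge_coboundary[OF leaf.hyps(3,4) leaf.prems(2)] by blast
  have "\<exists>\<Psi>. \<forall>b y. {b, y} \<in> ?E' \<longrightarrow>
      \<Psi> y b = - \<Psi> b y \<and> (\<forall>(a, x) \<in> R. c b y a x = \<Psi> b y x - \<Psi> b y a)"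
  proof (rule leaf.IH)
    have anti: "\<And>a x. (a, x) \<in> R \<Longrightarrow> c p l a x = - c l p a x"
      by (rule leaf.prems(1)[OF leaf.hyps(3)])
    fix b
    show "\<exists>T. \<forall>(a, x) \<in> R. (\<Sum>y | {b, y} \<in> ?E'. c b y a x) = T x - T a"
      by (rule leaf_removal_sum_coboundary[OF leaf.hyps(1,3,4) anti leaf.prems(2)])
  qed (use leaf.prems(1) in auto)
  then obtain \<Psi> where \<Psi>: "\<And>b y. {b, y} \<in> ?E' \<Longrightarrow>
      \<Psi> y b = - \<Psi> b y \<and> (\<forall>(a, x) \<in> R. c b y a x = \<Psi> b y x - \<Psi> b y a)"
    by blast
  define \<Psi>' where "\<Psi>' b y = (if b = l \<and> y = p then Tl else if b = p \<and> y = l then - Tl else \<Psi> b y)"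
    for b y
  show ?case
  proof (intro exI allI impI)
    fix b y assume "{b, y} \<in> E"
    then consider "b = l" "y = p" | "b = p" "y = l" | "{b, y} \<in> ?E'" "b \<noteq> l" "y \<noteq> l"
      using leaf_edge_cases[OF leaf.hyps(4)] by blast
    then show "\<Psi>' y b = - \<Psi>' b y \<and> (\<forall>(a, x) \<in> R. c b y a x = \<Psi>' b y x - \<Psi>' b y a)"
    proof cases
      case 1
      then show ?thesis using \<open>l \<noteq> p\<close> Tl by (auto simp: \<Psi>'_def)
    next
      case 2
      then show ?thesis using \<open>l \<noteq> p\<close> Tl leaf.prems(1)[OF leaf.hyps(3)] by (auto simp: \<Psi>'_def)
    next
      case 3
      then show ?thesis using \<Psi>[OF 3(1)] by (simp add: \<Psi>'_def)
    qed
  qed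
qed

section \<open>The triangulated product\<close>

definition column_sum ::
  "'b set set \<Rightarrow> ('a \<times> 'b) set set \<Rightarrow> (('a \<times> 'b) set \<Rightarrow> int) \<Rightarrow> 'a \<Rightarrow> 'b \<Rightarrow> 'a \<Rightarrow> int" where
  "column_sum EH Dg D a b x =
     D {(a, b), (x, b)} + (\<Sum>y | {b, y} \<in> EH \<and> {(a, b), (x, y)} \<in> Dg. D {(a, b), (x, y)})"

definition oriented_diagonal_value ::
  "('a \<times> 'b) set set \<Rightarrow> (('a \<times> 'b) set \<Rightarrow> int) \<Rightarrow> 'a \<Rightarrow> 'a \<Rightarrow> 'b \<Rightarrow> 'b \<Rightarrow> int" where
  "oriented_diagonal_value Dg D a x b y =
     (if {(a, b), (x, y)} \<in> Dg then D {(a, b), (x, y)} else - D {(x, b), (a, y)})"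

lemma sum_Collect_conj_if:
  "finite {y. P y} \<Longrightarrow> (\<Sum>y | P y \<and> Q y. f y) = (\<Sum>y | P y. if Q y then f y else 0)"
  by (simp add: sum.inter_filter[symmetric])

lemma triangleI:
  assumes "{a, x} \<in> EG" "{b, y} \<in> EH" "{(a, b), (x, y)} \<in> Dg" "c \<in> {(x, b), (a, y)}"
  shows "insert c {(a, b), (x, y)} \<in> triangles EG EH Dg"
  using assms unfolding triangles_def by blast

locale triangulated_product =
  fixes VG :: "'a set" and EG :: "'a set set" and VH :: "'b set" and EH :: "'b set set"
    and Dg :: "('a \<times> 'b) set set"
  assumes G: "simple_graph VG EG" and H: "simple_graph VH EH" and tri: "is_triangulation EG EH Dg"
begin

lemma G_edge: "{a, x} \<in> EG \<Longrightarrow> a \<noteq> x \<and> a \<in> VG \<and> x \<in> VG"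
  using simple_graph_edge[OF G] .

lemma H_edge: "{b, y} \<in> EH \<Longrightarrow> b \<noteq> y \<and> b \<in> VH \<and> y \<in> VH"
  using simple_graph_edge[OF H] .

lemma diagonalE:
  assumes "e \<in> Dg"
  obtains a x b y where "e = {(a, b), (x, y)}" "{a, x} \<in> EG" "{b, y} \<in> EH"
  using assms tri unfolding is_triangulation_def by blast

lemma diagonal_iff_not_other:
  "{a, x} \<in> EG \<Longrightarrow> {b, y} \<in> EH \<Longrightarrow> {(a, b), (x, y)} \<in> Dg \<longleftrightarrow> {(x, b), (a, y)} \<notin> Dg"
  using tri unfolding is_triangulation_def by blast

lemma diagonal_coordinates_differ:
  assumes "e \<in> Dg" "u \<in> e" "w \<in> e" "u \<noteq> w"
  shows "fst u \<noteq> fst w" "snd u \<noteq> snd w"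
proof -
  obtain a x b y where e: "e = {(a, b), (x, y)}" and "{a, x} \<in> EG" "{b, y} \<in> EH"
    using diagonalE[OF assms(1)] .
  then have "a \<noteq> x" "b \<noteq> y"
    using G_edge H_edge by blast+
  then show "fst u \<noteq> fst w" "snd u \<noteq> snd w"
    using assms(2-4) unfolding e by auto
qed

lemma triangle_pair_with_distinct_coordinates:
  assumes "c \<in> {(x, b), (a, y)}" "u \<in> insert c {(a, b), (x, y)}" "w \<in> insert c {(a, b), (x, y)}"
    and "fst u \<noteq> fst w" "snd u \<noteq> snd w"
  shows "{u, w} = {(a, b), (x, y)}"
  using assms by auto

lemma triangle_diagonal_unique:
  assumes "c \<in> {(x, b), (a, y)}" "e \<in> Dg" "e \<subseteq> insert c {(a, b), (x, y)}"
  shows "e = {(a, b), (x, y)}"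
proof -
  obtain u w where uw: "e = {u, w}" "u \<noteq> w"
    using assms(2) by (metis diagonalE G_edge Pair_inject)
  have "u \<in> insert c {(a, b), (x, y)}" "w \<in> insert c {(a, b), (x, y)}"
    using assms(3) uw(1) by auto
  moreover have "fst u \<noteq> fst w" "snd u \<noteq> snd w"
    using diagonal_coordinates_differ[of e u w] assms(2) uw by simp_all
  ultimately have "{u, w} = {(a, b), (x, y)}"
    by (rule triangle_pair_with_distinct_coordinates[OF assms(1)])
  with uw(1) show ?thesis by simp
qed

lemma diag_triangle:
  assumes "{(a, b), (x, y)} \<in> Dg" "c \<in> {(x, b), (a, y)}"
  shows "diag Dg (insert c {(a, b), (x, y)}) = {(a, b), (x, y)}"
  unfolding diag_def
proof (rule the_equality)
  show "{(a, b), (x, y)} \<in> Dg \<and> {(a, b), (x, y)} \<subseteq> insert c {(a, b), (x, y)}"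
    using assms(1) by blast
qed (use triangle_diagonal_unique[OF assms(2)] in blast)

lemma triangle_corner_form:
  "\<sigma> \<in> triangles EG EH Dg \<longleftrightarrow> (\<exists>a x b y. {a, x} \<in> EG \<and> {b, y} \<in> EH \<and>
     {(a, b), (x, y)} \<in> Dg \<and> \<sigma> = {(x, b), (a, b), (x, y)})"
proof
  assume "\<sigma> \<in> triangles EG EH Dg"
  then obtain a x b y c where sq: "{a, x} \<in> EG" "{b, y} \<in> EH" "{(a, b), (x, y)} \<in> Dg"
    and c: "c \<in> {(x, b), (a, y)}" and \<sigma>: "\<sigma> = insert c {(a, b), (x, y)}"
    unfolding triangles_def by blast
  from c show "\<exists>a x b y. {a, x} \<in> EG \<and> {b, y} \<in> EH \<and>
     {(a, b), (x, y)} \<in> Dg \<and> \<sigma> = {(x, b), (a, b), (x, y)}"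
  proof
    assume "c = (x, b)"
    then show ?thesis using sq \<sigma> by blast
  next
    assume "c \<in> {(a, y)}"
    then have "\<sigma> = {(a, y), (x, y), (a, b)}" using \<sigma> by auto
    moreover have "{x, a} \<in> EG" "{y, b} \<in> EH" "{(x, y), (a, b)} \<in> Dg"
      using sq by (simp_all add: insert_commute)
    ultimately show ?thesis by blast
  qed
next
  assume "\<exists>a x b y. {a, x} \<in> EG \<and> {b, y} \<in> EH \<and>
     {(a, b), (x, y)} \<in> Dg \<and> \<sigma> = {(x, b), (a, b), (x, y)}"
  then obtain a x b y where "{a, x} \<in> EG" "{b, y} \<in> EH" "{(a, b), (x, y)} \<in> Dg"
    and "\<sigma> = insert (x, b) {(a, b), (x, y)}"
    by blast
  then show "\<sigma> \<in> triangles EG EH Dg"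
    using triangleI[of a x EG b y EH Dg "(x, b)"] by simp
qed

lemma triangles_containing_diagonal:
  assumes ax: "{a, x} \<in> EG" and by': "{b, y} \<in> EH" and d: "{(a, b), (x, y)} \<in> Dg"
  shows "{\<sigma> \<in> triangles EG EH Dg. {(a, b), (x, y)} \<subseteq> \<sigma>} =
    {insert (x, b) {(a, b), (x, y)}, insert (a, y) {(a, b), (x, y)}}"
proof (intro set_eqI iffI)
  fix \<sigma> assume "\<sigma> \<in> {\<sigma> \<in> triangles EG EH Dg. {(a, b), (x, y)} \<subseteq> \<sigma>}"
  then obtain a' x' b' y' c where sq: "{(a', b'), (x', y')} \<in> Dg"
    and c: "c \<in> {(x', b'), (a', y')}" and \<sigma>: "\<sigma> = insert c {(a', b'), (x', y')}"
    and sub: "{(a, b), (x, y)} \<subseteq> \<sigma>"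
    unfolding triangles_def by blast
  have "{(a, b), (x, y)} = {(a', b'), (x', y')}"
    using sub unfolding \<sigma> by (rule triangle_diagonal_unique[OF c d])
  then have "(a', b', x', y') = (a, b, x, y) \<or> (a', b', x', y') = (x, y, a, b)"
    by (auto simp: doubleton_eq_iff)
  then show "\<sigma> \<in> {insert (x, b) {(a, b), (x, y)}, insert (a, y) {(a, b), (x, y)}}"
    using c \<sigma> by (auto simp: insert_commute)
next
  fix \<sigma> assume "\<sigma> \<in> {insert (x, b) {(a, b), (x, y)}, insert (a, y) {(a, b), (x, y)}}"
  then show "\<sigma> \<in> {\<sigma> \<in> triangles EG EH Dg. {(a, b), (x, y)} \<subseteq> \<sigma>}"
    using triangleI[OF ax by' d, of "(x, b)"] triangleI[OF ax by' d, of "(a, y)"] by auto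
qed

lemma Div_diagonal:
  assumes ax: "{a, x} \<in> EG" and by': "{b, y} \<in> EH" and d: "{(a, b), (x, y)} \<in> Dg"
  shows "Div VG EG VH EH Dg \<phi> {(a, b), (x, y)} = \<phi> (x, b) + \<phi> (a, y) - \<phi> (a, b) - \<phi> (x, y)"
proof -
  let ?d = "{(a, b), (x, y)}"
  have "a \<noteq> x" "b \<noteq> y" using G_edge[OF ax] H_edge[OF by'] by auto
  then have "insert (x, b) ?d - ?d = {(x, b)}" "insert (a, y) ?d - ?d = {(a, y)}"
    "insert (x, b) ?d \<noteq> insert (a, y) ?d"
    by auto
  then have apexes: "(\<Sum>\<sigma>\<in>{\<sigma> \<in> triangles EG EH Dg. ?d \<subseteq> \<sigma>}. \<phi> (the_elem (\<sigma> - ?d))) = \<phi> (x, b) + \<phi> (a, y)"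
    unfolding triangles_containing_diagonal[OF ax by' d] by simp
  have "alpha EG EH Dg ?d u = 1" if "u \<in> ?d" for u
    using that d by (simp add: alpha_def)
  then have ends: "(\<Sum>u\<in>?d. int (alpha EG EH Dg ?d u) * \<phi> u) = \<phi> (a, b) + \<phi> (x, y)"
    using \<open>a \<noteq> x\<close> by simp
  have "?d \<in> tri_edges VG EG VH EH Dg"
    using d by (simp add: tri_edges_def)
  with apexes ends show ?thesis
    unfolding Div_def by simp
qed

text \<open>In a triangle containing a non-diagonal edge exactly one end of that edge lies off the
  diagonal, so the weights \<open>alpha\<close> distribute one unit per triangle.\<close>
lemma Div_non_diagonal:
  assumes r: "r \<in> tri_edges VG EG VH EH Dg" "r \<notin> Dg"
    and fin: "finite r" "finite {\<sigma> \<in> triangles EG EH Dg. r \<subseteq> \<sigma>}"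
    and off: "\<And>\<sigma>. \<sigma> \<in> triangles EG EH Dg \<Longrightarrow> r \<subseteq> \<sigma> \<Longrightarrow> \<exists>u. r - diag Dg \<sigma> = {u}"
  shows "Div VG EG VH EH Dg \<phi> r = (\<Sum>\<sigma>\<in>{\<sigma> \<in> triangles EG EH Dg. r \<subseteq> \<sigma>}.
           \<phi> (the_elem (\<sigma> - r)) - \<phi> (the_elem (r - diag Dg \<sigma>)))"
proof -
  let ?T = "{\<sigma> \<in> triangles EG EH Dg. r \<subseteq> \<sigma>}"
  let ?off = "\<lambda>\<sigma> u. if u \<notin> diag Dg \<sigma> then \<phi> u else 0"
  have "int (alpha EG EH Dg r u) * \<phi> u = (\<Sum>\<sigma>\<in>?T. ?off \<sigma> u)" if "u \<in> r" for u
  proof -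
    have "alpha EG EH Dg r u = card {\<sigma> \<in> ?T. u \<notin> diag Dg \<sigma>}"
      using that r(2) by (simp add: alpha_def conj_assoc)
    then show ?thesis
      by (simp add: sum.inter_filter[OF fin(2), symmetric])
  qed
  then have "(\<Sum>u\<in>r. int (alpha EG EH Dg r u) * \<phi> u) = (\<Sum>u\<in>r. \<Sum>\<sigma>\<in>?T. ?off \<sigma> u)"
    by (rule sum.cong[OF refl])
  also have "\<dots> = (\<Sum>\<sigma>\<in>?T. \<Sum>u\<in>r. ?off \<sigma> u)"
    by (rule sum.swap)
  also have "\<dots> = (\<Sum>\<sigma>\<in>?T. \<phi> (the_elem (r - diag Dg \<sigma>)))"
  proof (rule sum.cong[OF refl])
    fix \<sigma> assume "\<sigma> \<in> ?T"
    then obtain u where u: "r - diag Dg \<sigma> = {u}" using off by blast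
    have "(\<Sum>u\<in>r. ?off \<sigma> u) = (\<Sum>u\<in>{u \<in> r. u \<notin> diag Dg \<sigma>}. \<phi> u)"
      by (simp add: sum.inter_filter[OF fin(1)])
    also have "{u \<in> r. u \<notin> diag Dg \<sigma>} = {u}"
      using u by blast
    finally show "(\<Sum>u\<in>r. ?off \<sigma> u) = \<phi> (the_elem (r - diag Dg \<sigma>))"
      using u by simp
  qed
  finally show ?thesis
    using r(1) unfolding Div_def by (simp add: sum_subtractf)
qed

lemma triangles_containing_horizontal_edge:
  assumes ax: "{a, x} \<in> EG"
  shows "{\<sigma> \<in> triangles EG EH Dg. {(a, b), (x, b)} \<subseteq> \<sigma>} =
    (\<lambda>y. insert (if {(a, b), (x, y)} \<in> Dg then (x, y) else (a, y)) {(a, b), (x, b)}) ` {y. {b, y} \<in> EH}"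
    (is "_ = ?tri ` _")
proof (intro set_eqI iffI)
  fix \<sigma> assume "\<sigma> \<in> {\<sigma> \<in> triangles EG EH Dg. {(a, b), (x, b)} \<subseteq> \<sigma>}"
  then obtain a' x' b' y' where sq: "{a', x'} \<in> EG" "{b', y'} \<in> EH" "{(a', b'), (x', y')} \<in> Dg"
    and \<sigma>: "\<sigma> = {(x', b'), (a', b'), (x', y')}" and sub: "{(a, b), (x, b)} \<subseteq> \<sigma>"
    unfolding triangle_corner_form by blast
  have "a' \<noteq> x'" "b' \<noteq> y'" "a \<noteq> x" using G_edge sq(1) H_edge sq(2) G_edge ax by blast+
  then have "b' = b" and ends: "(a', x') = (a, x) \<or> (a', x') = (x, a)"
    using sub unfolding \<sigma> by auto
  have y': "y' \<in> {y. {b, y} \<in> EH}" using sq(2) \<open>b' = b\<close> by simp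
  from ends show "\<sigma> \<in> ?tri ` {y. {b, y} \<in> EH}"
  proof
    assume "(a', x') = (a, x)"
    then have "\<sigma> = ?tri y'" using sq(3) \<sigma> \<open>b' = b\<close> by auto
    with y' show ?thesis by blast
  next
    assume "(a', x') = (x, a)"
    then have "{(a, b), (x, y')} \<notin> Dg"
      using diagonal_iff_not_other[OF ax, of b y'] sq(2,3) \<open>b' = b\<close> by simp
    then have "\<sigma> = ?tri y'" using \<open>(a', x') = (x, a)\<close> \<sigma> \<open>b' = b\<close> by auto
    with y' show ?thesis by blast
  qed
next
  fix \<sigma> assume "\<sigma> \<in> ?tri ` {y. {b, y} \<in> EH}"
  then obtain y where by': "{b, y} \<in> EH" and \<sigma>: "\<sigma> = ?tri y" by blast
  have "\<sigma> \<in> triangles EG EH Dg"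
  proof (cases "{(a, b), (x, y)} \<in> Dg")
    case True
    then have "\<sigma> = insert (x, b) {(a, b), (x, y)}" using \<sigma> by auto
    with triangleI[OF ax by' True] show ?thesis by simp
  next
    case False
    then have d: "{(x, b), (a, y)} \<in> Dg" using diagonal_iff_not_other[OF ax by'] by simp
    have "{x, a} \<in> EG" using ax by (simp add: insert_commute)
    moreover have "\<sigma> = insert (a, b) {(x, b), (a, y)}" using \<sigma> False by auto
    ultimately show ?thesis using triangleI[OF _ by' d] by simp
  qed
  then show "\<sigma> \<in> {\<sigma> \<in> triangles EG EH Dg. {(a, b), (x, b)} \<subseteq> \<sigma>}"
    using \<sigma> by blast
qed

lemma horizontal_edge_minus_diag:
  assumes ax: "{a, x} \<in> EG" and by': "{b, y} \<in> EH"
  shows "{(a, b), (x, b)} - diag Dg (insert (if {(a, b), (x, y)} \<in> Dg then (x, y) else (a, y))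
           {(a, b), (x, b)}) = {if {(a, b), (x, y)} \<in> Dg then (x, b) else (a, b)}"
proof -
  have "a \<noteq> x" "b \<noteq> y" using G_edge[OF ax] H_edge[OF by'] by auto
  show ?thesis
  proof (cases "{(a, b), (x, y)} \<in> Dg")
    case True
    then have "diag Dg (insert (x, y) {(a, b), (x, b)}) = {(a, b), (x, y)}"
      using diag_triangle[OF True, of "(x, b)"] by (simp add: insert_commute)
    moreover have "{(a, b), (x, b)} - {(a, b), (x, y)} = {(x, b)}"
      using \<open>a \<noteq> x\<close> \<open>b \<noteq> y\<close> by auto
    ultimately show ?thesis using True by simp
  next
    case False
    then have d: "{(x, b), (a, y)} \<in> Dg" using diagonal_iff_not_other[OF ax by'] by simp
    have "insert (a, y) {(a, b), (x, b)} = insert (a, b) {(x, b), (a, y)}" by auto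
    then have "diag Dg (insert (a, y) {(a, b), (x, b)}) = {(x, b), (a, y)}"
      using diag_triangle[OF d, of "(a, b)"] by simp
    moreover have "{(a, b), (x, b)} - {(x, b), (a, y)} = {(a, b)}"
      using \<open>a \<noteq> x\<close> \<open>b \<noteq> y\<close> by auto
    ultimately show ?thesis using False by simp
  qed
qed

lemma Div_horizontal_edge:
  assumes ax: "{a, x} \<in> EG" and bV: "b \<in> VH"
  shows "Div VG EG VH EH Dg \<phi> {(a, b), (x, b)} = (\<Sum>y | {b, y} \<in> EH.
           if {(a, b), (x, y)} \<in> Dg then \<phi> (x, y) - \<phi> (x, b) else \<phi> (a, y) - \<phi> (a, b))"
proof -
  let ?h = "{(a, b), (x, b)}"
  let ?N = "{y. {b, y} \<in> EH}"
  define apex where "apex y = (if {(a, b), (x, y)} \<in> Dg then (x, y) else (a, y))" for y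
  define off where "off y = (if {(a, b), (x, y)} \<in> Dg then (x, b) else (a, b))" for y
  have T: "{\<sigma> \<in> triangles EG EH Dg. ?h \<subseteq> \<sigma>} = (\<lambda>y. insert (apex y) ?h) ` ?N"
    unfolding apex_def by (rule triangles_containing_horizontal_edge[OF ax])
  have "a \<noteq> x" using G_edge[OF ax] by blast
  have apex: "insert (apex y) ?h - ?h = {apex y}" "snd (apex y) = y" if "y \<in> ?N" for y
    using that H_edge by (auto simp: apex_def)
  have inj: "inj_on (\<lambda>y. insert (apex y) ?h) ?N"
  proof (rule inj_onI)
    fix y y' assume "y \<in> ?N" "y' \<in> ?N" "insert (apex y) ?h = insert (apex y') ?h"
    then have "{apex y} = {apex y'}" using apex by metis
    then show "y = y'" using apex \<open>y \<in> ?N\<close> \<open>y' \<in> ?N\<close> by (metis singleton_inject)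
  qed
  have off: "?h - diag Dg (insert (apex y) ?h) = {off y}" if "{b, y} \<in> EH" for y
    unfolding apex_def off_def by (rule horizontal_edge_minus_diag[OF ax that])
  have "?h \<in> tri_edges VG EG VH EH Dg"
    using ax bV by (auto simp: tri_edges_def hor_edges_def)
  moreover have "?h \<notin> Dg"
    using diagonal_coordinates_differ(2)[of ?h "(a, b)" "(x, b)"] \<open>a \<noteq> x\<close> by auto
  moreover have "finite {\<sigma> \<in> triangles EG EH Dg. ?h \<subseteq> \<sigma>}"
    unfolding T using simple_graph_finite_neighbours[OF H] by blast
  moreover have "\<exists>u. ?h - diag Dg \<sigma> = {u}" if "\<sigma> \<in> triangles EG EH Dg" "?h \<subseteq> \<sigma>" for \<sigma>
  proof -
    from that obtain y where "{b, y} \<in> EH" "\<sigma> = insert (apex y) ?h"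
      using T by blast
    then show ?thesis using off by blast
  qed
  ultimately have "Div VG EG VH EH Dg \<phi> ?h = (\<Sum>\<sigma>\<in>(\<lambda>y. insert (apex y) ?h) ` ?N.
      \<phi> (the_elem (\<sigma> - ?h)) - \<phi> (the_elem (?h - diag Dg \<sigma>)))"
    using Div_non_diagonal[of ?h] unfolding T by simp
  also have "\<dots> = (\<Sum>y\<in>?N. \<phi> (apex y) - \<phi> (off y))"
    by (simp add: sum.reindex[OF inj] apex off)
  also have "\<dots> = (\<Sum>y\<in>?N. if {(a, b), (x, y)} \<in> Dg then \<phi> (x, y) - \<phi> (x, b) else \<phi> (a, y) - \<phi> (a, b))"
    by (rule sum.cong) (simp_all add: apex_def off_def)
  finally show ?thesis .
qed

lemma column_sum_Div:
  assumes ax: "{a, x} \<in> EG" and bV: "b \<in> VH"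
  shows "column_sum EH Dg (Div VG EG VH EH Dg \<phi>) a b x = (\<Sum>y | {b, y} \<in> EH. \<phi> (a, y) - \<phi> (a, b))"
proof -
  let ?N = "{y. {b, y} \<in> EH}"
  let ?P = "\<lambda>y. {(a, b), (x, y)} \<in> Dg"
  have fin: "finite ?N" using simple_graph_finite_neighbours[OF H] .
  have "(\<Sum>y | {b, y} \<in> EH \<and> ?P y. Div VG EG VH EH Dg \<phi> {(a, b), (x, y)})
      = (\<Sum>y\<in>?N. if ?P y then \<phi> (x, b) + \<phi> (a, y) - \<phi> (a, b) - \<phi> (x, y) else 0)"
    unfolding sum_Collect_conj_if[OF fin] by (rule sum.cong) (simp_all add: Div_diagonal[OF ax])
  then have "column_sum EH Dg (Div VG EG VH EH Dg \<phi>) a b x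
      = (\<Sum>y\<in>?N. (if ?P y then \<phi> (x, y) - \<phi> (x, b) else \<phi> (a, y) - \<phi> (a, b))
          + (if ?P y then \<phi> (x, b) + \<phi> (a, y) - \<phi> (a, b) - \<phi> (x, y) else 0))"
    unfolding column_sum_def Div_horizontal_edge[OF ax bV] by (simp add: sum.distrib)
  also have "\<dots> = (\<Sum>y\<in>?N. \<phi> (a, y) - \<phi> (a, b))"
    by (rule sum.cong) auto
  finally show ?thesis .
qed

text \<open>This is where the Cartier property enters: near \<open>(a, b)\<close> the divisor agrees with a
  principal one, whose column sums do not depend on the column by the previous lemma.\<close>
lemma cartier_column_sum_independent:
  assumes D: "is_cartier VG EG VH EH Dg D"
    and ax: "{a, x} \<in> EG" and ax': "{a, x'} \<in> EG" and bV: "b \<in> VH"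
  shows "column_sum EH Dg D a b x = column_sum EH Dg D a b x'"
proof -
  have "(a, b) \<in> tri_vertices VG VH" using G_edge[OF ax] bV by (simp add: tri_vertices_def)
  then obtain \<phi> where \<phi>: "\<And>r. r \<in> tri_edges VG EG VH EH Dg \<Longrightarrow> (a, b) \<in> r \<Longrightarrow>
      D r = Div VG EG VH EH Dg \<phi> r"
    using D unfolding is_cartier_def by blast
  have "column_sum EH Dg D a b z = column_sum EH Dg (Div VG EG VH EH Dg \<phi>) a b z"
    if "{a, z} \<in> EG" for z
  proof -
    have "{(a, b), (z, b)} \<in> tri_edges VG EG VH EH Dg"
      using that bV by (auto simp: tri_edges_def hor_edges_def)
    then have "D {(a, b), (z, b)} = Div VG EG VH EH Dg \<phi> {(a, b), (z, b)}"
      using \<phi> by simp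
    moreover have "D {(a, b), (z, y)} = Div VG EG VH EH Dg \<phi> {(a, b), (z, y)}"
      if "{(a, b), (z, y)} \<in> Dg" for y
      using that \<phi> by (simp add: tri_edges_def)
    then have "(\<Sum>y | {b, y} \<in> EH \<and> {(a, b), (z, y)} \<in> Dg. D {(a, b), (z, y)}) =
        (\<Sum>y | {b, y} \<in> EH \<and> {(a, b), (z, y)} \<in> Dg. Div VG EG VH EH Dg \<phi> {(a, b), (z, y)})"
      by (intro sum.cong) auto
    ultimately show ?thesis
      unfolding column_sum_def by simp
  qed
  then show ?thesis
    using ax ax' column_sum_Div[OF _ bV] by simp
qed

lemma column_sum_difference:
  assumes ax: "{a, x} \<in> EG"
  shows "column_sum EH Dg D a b x - column_sum EH Dg D x b a =
    (\<Sum>y | {b, y} \<in> EH. oriented_diagonal_value Dg D a x b y)"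
proof -
  have fin: "finite {y. {b, y} \<in> EH}" using simple_graph_finite_neighbours[OF H] .
  have "{(x, b), (a, b)} = {(a, b), (x, b)}" "\<And>y. {(x, b), (a, y)} = {(a, y), (x, b)}" by auto
  then have "column_sum EH Dg D a b x - column_sum EH Dg D x b a =
      (\<Sum>y | {b, y} \<in> EH. (if {(a, b), (x, y)} \<in> Dg then D {(a, b), (x, y)} else 0)
                          - (if {(x, b), (a, y)} \<in> Dg then D {(x, b), (a, y)} else 0))"
    unfolding column_sum_def sum_Collect_conj_if[OF fin] by (simp add: sum_subtractf)
  also have "\<dots> = (\<Sum>y | {b, y} \<in> EH. oriented_diagonal_value Dg D a x b y)"
    using diagonal_iff_not_other[OF ax]
    by (intro sum.cong) (auto simp: oriented_diagonal_value_def)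
  finally show ?thesis .
qed

lemma oriented_diagonal_value_swap:
  assumes "{a, x} \<in> EG" "{b, y} \<in> EH"
  shows "oriented_diagonal_value Dg D a x y b = - oriented_diagonal_value Dg D a x b y"
proof -
  have "{(a, y), (x, b)} = {(x, b), (a, y)}" "{(x, y), (a, b)} = {(a, b), (x, y)}" by auto
  then show ?thesis
    using diagonal_iff_not_other[OF assms] by (simp add: oriented_diagonal_value_def)
qed

lemma cartier_row_sum_coboundary:
  assumes D: "is_cartier VG EG VH EH Dg D"
  shows "\<exists>T. \<forall>(a, x) \<in> {(a, x). {a, x} \<in> EG}.
           (\<Sum>y | {b, y} \<in> EH. oriented_diagonal_value Dg D a x b y) = T x - T a"
proof (cases "b \<in> VH")
  case True
  define T where "T a = - column_sum EH Dg D a b (SOME x. {a, x} \<in> EG)" for a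
  have T: "T a = - column_sum EH Dg D a b x" if "{a, x} \<in> EG" for a x
    using cartier_column_sum_independent[OF D that someI[of "\<lambda>x. {a, x} \<in> EG", OF that] True]
    by (simp add: T_def)
  have "(\<Sum>y | {b, y} \<in> EH. oriented_diagonal_value Dg D a x b y) = T x - T a"
    if ax: "{a, x} \<in> EG" for a x
  proof -
    have "{x, a} \<in> EG" using ax by (simp add: insert_commute)
    then show ?thesis using column_sum_difference[OF ax] T[OF ax] T[of x a] by simp
  qed
  then show ?thesis by blast
next
  case False
  then have "{y. {b, y} \<in> EH} = {}" using H_edge by blast
  then show ?thesis by (intro exI[of _ 0]) simp
qed

lemma mixed_potential_if_forest_H:
  assumes D: "is_cartier VG EG VH EH Dg D" and acyclic: "\<not> has_cycle VH EH"
  shows "\<exists>\<phi>. \<forall>a x b y. {a, x} \<in> EG \<longrightarrow> {b, y} \<in> EH \<longrightarrow>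
           \<phi> (x, y) - \<phi> (x, b) - \<phi> (a, y) + \<phi> (a, b) = oriented_diagonal_value Dg D a x b y"
proof -
  let ?c = "\<lambda>b y a x. oriented_diagonal_value Dg D a x b y"
  let ?R = "{(a, x). {a, x} \<in> EG}"
  have "\<exists>T. \<forall>(a, x) \<in> ?R. (\<Sum>y | {b, y} \<in> EH. ?c b y a x) = T x - T a" for b
    using cartier_row_sum_coboundary[OF D] .
  moreover have "?c y b a x = - ?c b y a x" if "{b, y} \<in> EH" "(a, x) \<in> ?R" for b y a x
    using oriented_diagonal_value_swap that by simp
  ultimately obtain \<Psi> where \<Psi>: "\<And>b y. {b, y} \<in> EH \<Longrightarrow>
      \<Psi> y b = - \<Psi> b y \<and> (\<forall>(a, x) \<in> ?R. ?c b y a x = \<Psi> b y x - \<Psi> b y a)"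
    using forest_split_coboundary[OF H acyclic, where c = ?c and R = ?R] by blast
  obtain F :: "'b \<Rightarrow> 'a \<Rightarrow> int" where F: "\<And>b y. {b, y} \<in> EH \<Longrightarrow> F y - F b = \<Psi> b y"
    using forest_potential[OF H acyclic, where \<omega> = \<Psi>] \<Psi> by blast
  have "F y x - F b x - F y a + F b a = oriented_diagonal_value Dg D a x b y"
    if "{a, x} \<in> EG" "{b, y} \<in> EH" for a x b y
  proof -
    have F': "F y v - F b v = \<Psi> b y v" for v
      using F[OF that(2)] by (simp add: fun_eq_iff)
    have "F y x - F b x - F y a + F b a = (F y x - F b x) - (F y a - F b a)"
      by simp
    also have "\<dots> = \<Psi> b y x - \<Psi> b y a"
      by (simp only: F')
    also have "\<dots> = oriented_diagonal_value Dg D a x b y"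
      using \<Psi>[OF that(2)] that(1) by auto
    finally show ?thesis .
  qed
  then show ?thesis
    by (intro exI[of _ "\<lambda>(a, b). F b a"]) simp
qed

lemma cartier_add_Div:
  assumes "is_cartier VG EG VH EH Dg D"
  shows "is_cartier VG EG VH EH Dg (\<lambda>r. D r + Div VG EG VH EH Dg \<phi> r)"
  unfolding is_cartier_def
proof (intro conjI ballI)
  show "is_divisor VG EG VH EH Dg (\<lambda>r. D r + Div VG EG VH EH Dg \<phi> r)"
    using assms by (simp add: is_cartier_def is_divisor_def Div_def)
  fix v assume "v \<in> tri_vertices VG VH"
  then obtain \<psi> where "\<forall>r \<in> tri_edges VG EG VH EH Dg. v \<in> r \<longrightarrow> D r = Div VG EG VH EH Dg \<psi> r"
    using assms unfolding is_cartier_def by blast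
  then show "\<exists>\<psi>. \<forall>r \<in> tri_edges VG EG VH EH Dg. v \<in> r \<longrightarrow>
      D r + Div VG EG VH EH Dg \<phi> r = Div VG EG VH EH Dg \<psi> r"
    by (intro exI[of _ "\<lambda>u. \<psi> u + \<phi> u"]) (simp add: Div_def sum.distrib distrib_left)
qed

lemma diagonal_free_representative_if_forest_H:
  assumes D: "is_cartier VG EG VH EH Dg D" and acyclic: "\<not> has_cycle VH EH"
  shows "\<exists>D' \<phi>. is_cartier VG EG VH EH Dg D' \<and> (\<forall>e\<in>Dg. D' e = 0) \<and>
           (\<forall>r. D' r = D r + Div VG EG VH EH Dg \<phi> r)"
proof -
  obtain \<phi> where \<phi>: "\<And>a x b y. {a, x} \<in> EG \<Longrightarrow> {b, y} \<in> EH \<Longrightarrow>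
      \<phi> (x, y) - \<phi> (x, b) - \<phi> (a, y) + \<phi> (a, b) = oriented_diagonal_value Dg D a x b y"
    using mixed_potential_if_forest_H[OF D acyclic] by blast
  have "D e + Div VG EG VH EH Dg \<phi> e = 0" if d: "e \<in> Dg" for e
  proof -
    obtain a x b y where e: "e = {(a, b), (x, y)}" and sq: "{a, x} \<in> EG" "{b, y} \<in> EH"
      using diagonalE[OF d] .
    show ?thesis
      using \<phi>[OF sq] Div_diagonal[OF sq, of \<phi>] d
      unfolding e by (simp add: oriented_diagonal_value_def)
  qed
  then show ?thesis
    using cartier_add_Div[OF D] by blast
qed

end

section \<open>Transposing the product\<close>

abbreviation swapped :: "('a \<times> 'b) set \<Rightarrow> ('b \<times> 'a) set" where
  "swapped e \<equiv> prod.swap ` e"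

lemma swapped_swapped [simp]: "swapped (swapped e) = e"
  by (simp add: image_image)

lemma swapped_image_swapped [simp]: "swapped ` swapped ` E = E"
  by (simp add: image_image)

lemma swap_mem_swapped [simp]: "prod.swap v \<in> swapped A \<longleftrightarrow> v \<in> A"
  by (simp add: inj_image_mem_iff)

lemma inj_swapped: "inj_on swapped A"
  by (rule inj_on_inverseI[of _ swapped]) simp

lemma swapped_mem_swapped_image [simp]: "swapped e \<in> swapped ` E \<longleftrightarrow> e \<in> E"
  using inj_swapped by (blast dest: inj_onD)

lemma mem_swapped_image: "e \<in> swapped ` E \<longleftrightarrow> swapped e \<in> E"
  using swapped_mem_swapped_image[of "swapped e"] by simp

lemma is_triangulation_swapped:
  assumes "is_triangulation EG EH Dg"
  shows "is_triangulation EH EG (swapped ` Dg)"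
  unfolding is_triangulation_def
proof (intro conjI subsetI allI impI)
  fix e assume "e \<in> swapped ` Dg"
  then obtain a x b y where "e = swapped {(a, b), (x, y)}" "{a, x} \<in> EG" "{b, y} \<in> EH"
    using assms unfolding is_triangulation_def by blast
  then show "e \<in> {{(b, a), (y, x)} | b y a x. {b, y} \<in> EH \<and> {a, x} \<in> EG}"
    by auto
next
  fix b y a x assume "{b, y} \<in> EH" "{a, x} \<in> EG"
  moreover have "swapped {(y, a), (b, x)} = {(x, b), (a, y)}" by auto
  ultimately show "{(b, a), (y, x)} \<in> swapped ` Dg \<longleftrightarrow> {(y, a), (b, x)} \<notin> swapped ` Dg"
    using assms unfolding is_triangulation_def mem_swapped_image by simp
qed

lemma hor_edges_swapped: "hor_edges EH VG = swapped ` ver_edges VG EH"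
proof (intro equalityI subsetI)
  fix e assume "e \<in> hor_edges EH VG"
  then obtain b y a where e: "e = {(b, a), (y, a)}" and "{b, y} \<in> EH" "a \<in> VG"
    unfolding hor_edges_def by blast
  then have "{(a, b), (a, y)} \<in> ver_edges VG EH"
    unfolding ver_edges_def by blast
  moreover have "e = swapped {(a, b), (a, y)}" using e by simp
  ultimately show "e \<in> swapped ` ver_edges VG EH" by blast
next
  fix e assume "e \<in> swapped ` ver_edges VG EH"
  then obtain a b y where "e = swapped {(a, b), (a, y)}" "a \<in> VG" "{b, y} \<in> EH"
    unfolding ver_edges_def by blast
  then show "e \<in> hor_edges EH VG"
    unfolding hor_edges_def by auto
qed

lemma ver_edges_swapped: "ver_edges VH EG = swapped ` hor_edges EG VH"
proof (intro equalityI subsetI)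
  fix e assume "e \<in> ver_edges VH EG"
  then obtain b a x where e: "e = {(b, a), (b, x)}" and "b \<in> VH" "{a, x} \<in> EG"
    unfolding ver_edges_def by blast
  then have "{(a, b), (x, b)} \<in> hor_edges EG VH"
    unfolding hor_edges_def by blast
  moreover have "e = swapped {(a, b), (x, b)}" using e by simp
  ultimately show "e \<in> swapped ` hor_edges EG VH" by blast
next
  fix e assume "e \<in> swapped ` hor_edges EG VH"
  then obtain a x b where "e = swapped {(a, b), (x, b)}" "{a, x} \<in> EG" "b \<in> VH"
    unfolding hor_edges_def by blast
  then show "e \<in> ver_edges VH EG"
    unfolding ver_edges_def by auto
qed

lemma tri_edges_swapped:
  "tri_edges VH EH VG EG (swapped ` Dg) = swapped ` tri_edges VG EG VH EH Dg"
proof -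
  have "tri_edges VH EH VG EG (swapped ` Dg) =
      swapped ` ver_edges VG EH \<union> swapped ` hor_edges EG VH \<union> swapped ` Dg"
    unfolding tri_edges_def by (simp only: hor_edges_swapped[of EH VG] ver_edges_swapped[of VH EG])
  then show ?thesis
    unfolding tri_edges_def image_Un by blast
qed

lemma triangles_swapped:
  "triangles EH EG (swapped ` Dg) = swapped ` triangles EG EH Dg"
proof (intro equalityI subsetI)
  fix \<sigma> assume "\<sigma> \<in> triangles EH EG (swapped ` Dg)"
  then obtain b y a x c where sq: "{b, y} \<in> EH" "{a, x} \<in> EG" "{(b, a), (y, x)} \<in> swapped ` Dg"
    and c: "c \<in> {(y, a), (b, x)}" and \<sigma>: "\<sigma> = insert c {(b, a), (y, x)}"
    unfolding triangles_def by blast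
  have "{(a, b), (x, y)} \<in> Dg" using sq(3) by (simp add: mem_swapped_image)
  moreover have "prod.swap c \<in> {(x, b), (a, y)}" using c by auto
  ultimately have "insert (prod.swap c) {(a, b), (x, y)} \<in> triangles EG EH Dg"
    using triangleI[OF sq(2,1)] by blast
  moreover have "\<sigma> = swapped (insert (prod.swap c) {(a, b), (x, y)})" using \<sigma> by simp
  ultimately show "\<sigma> \<in> swapped ` triangles EG EH Dg" by blast
next
  fix \<sigma> assume "\<sigma> \<in> swapped ` triangles EG EH Dg"
  then obtain a x b y c where sq: "{a, x} \<in> EG" "{b, y} \<in> EH" "{(a, b), (x, y)} \<in> Dg"
    and c: "c \<in> {(x, b), (a, y)}" and \<sigma>: "\<sigma> = swapped (insert c {(a, b), (x, y)})"
    unfolding triangles_def by blast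
  have "{(b, a), (y, x)} \<in> swapped ` Dg" using sq(3) by (simp add: mem_swapped_image)
  moreover have "prod.swap c \<in> {(y, a), (b, x)}" using c by auto
  ultimately have "insert (prod.swap c) {(b, a), (y, x)} \<in> triangles EH EG (swapped ` Dg)"
    using triangleI[OF sq(2,1)] by blast
  then show "\<sigma> \<in> triangles EH EG (swapped ` Dg)" using \<sigma> by simp
qed

context triangulated_product
begin

lemma triangulated_product_swapped: "triangulated_product VH EH VG EG (swapped ` Dg)"
  by (rule triangulated_product.intro[OF H G is_triangulation_swapped[OF tri]])

lemma card_tri_edge:
  assumes "r \<in> tri_edges VG EG VH EH Dg"
  shows "card r = 2"
  using assms G_edge H_edge diagonal_coordinates_differ
  unfolding tri_edges_def hor_edges_def ver_edges_def
  by (auto elim!: diagonalE)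

lemma card_triangle:
  assumes "\<sigma> \<in> triangles EG EH Dg"
  shows "card \<sigma> = 3"
proof -
  obtain a x b y where sq: "{a, x} \<in> EG" "{b, y} \<in> EH" and \<sigma>: "\<sigma> = {(x, b), (a, b), (x, y)}"
    using assms unfolding triangle_corner_form by blast
  moreover have "a \<noteq> x" "x \<noteq> a" "b \<noteq> y" "y \<noteq> b" using G_edge[OF sq(1)] H_edge[OF sq(2)] by auto
  ultimately show ?thesis by simp
qed

lemma triangle_minus_edge:
  assumes "\<sigma> \<in> triangles EG EH Dg" "r \<in> tri_edges VG EG VH EH Dg" "r \<subseteq> \<sigma>"
  obtains c where "\<sigma> - r = {c}"
proof -
  have "finite r" using card_tri_edge[OF assms(2)] card.infinite by fastforce
  then have "card (\<sigma> - r) = 1"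
    using card_Diff_subset[OF _ assms(3)] card_triangle[OF assms(1)] card_tri_edge[OF assms(2)]
    by simp
  then show ?thesis using that card_1_singletonE by blast
qed

lemma diag_swapped:
  assumes "\<sigma> \<in> triangles EG EH Dg"
  shows "diag (swapped ` Dg) (swapped \<sigma>) = swapped (diag Dg \<sigma>)"
proof -
  interpret T: triangulated_product VH EH VG EG "swapped ` Dg"
    by (rule triangulated_product_swapped)
  obtain a x b y c where d: "{(a, b), (x, y)} \<in> Dg" and c: "c \<in> {(x, b), (a, y)}"
    and \<sigma>: "\<sigma> = insert c {(a, b), (x, y)}"
    using assms unfolding triangles_def by blast
  have "{(b, a), (y, x)} \<in> swapped ` Dg" using d by (simp add: mem_swapped_image)
  moreover have "prod.swap c \<in> {(y, a), (b, x)}" using c by auto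
  ultimately have "diag (swapped ` Dg) (insert (prod.swap c) {(b, a), (y, x)}) = {(b, a), (y, x)}"
    by (rule T.diag_triangle)
  then show ?thesis
    using diag_triangle[OF d c] \<sigma> by simp
qed

lemma triangles_containing_swapped:
  "{\<sigma> \<in> triangles EH EG (swapped ` Dg). swapped r \<subseteq> \<sigma> \<and> P \<sigma>} =
     swapped ` {\<sigma> \<in> triangles EG EH Dg. r \<subseteq> \<sigma> \<and> P (swapped \<sigma>)}"
  unfolding triangles_swapped by (auto simp: inj_image_subset_iff)

lemma alpha_swapped:
  "alpha EH EG (swapped ` Dg) (swapped r) (prod.swap v) = alpha EG EH Dg r v"
proof -
  have "{\<sigma> \<in> triangles EH EG (swapped ` Dg). swapped r \<subseteq> \<sigma> \<and> prod.swap v \<notin> diag (swapped ` Dg) \<sigma>} =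
      swapped ` {\<sigma> \<in> triangles EG EH Dg. r \<subseteq> \<sigma> \<and> v \<notin> diag Dg \<sigma>}"
    unfolding triangles_containing_swapped
    by (rule image_cong) (auto simp: diag_swapped)
  then show ?thesis
    unfolding alpha_def by (simp add: card_image[OF inj_swapped])
qed

lemma Div_swapped:
  "Div VH EH VG EG (swapped ` Dg) (\<phi> \<circ> prod.swap) (swapped r) = Div VG EG VH EH Dg \<phi> r"
proof (cases "r \<in> tri_edges VG EG VH EH Dg")
  case False
  then show ?thesis by (simp add: Div_def tri_edges_swapped)
next
  case True
  have apexes: "(\<Sum>\<sigma>\<in>{\<sigma> \<in> triangles EH EG (swapped ` Dg). swapped r \<subseteq> \<sigma>}.
        (\<phi> \<circ> prod.swap) (the_elem (\<sigma> - swapped r)))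
      = (\<Sum>\<sigma>\<in>{\<sigma> \<in> triangles EG EH Dg. r \<subseteq> \<sigma>}. \<phi> (the_elem (\<sigma> - r)))"
  proof -
    have "(\<phi> \<circ> prod.swap) (the_elem (swapped \<sigma> - swapped r)) = \<phi> (the_elem (\<sigma> - r))"
      if \<sigma>: "\<sigma> \<in> triangles EG EH Dg" "r \<subseteq> \<sigma>" for \<sigma>
    proof -
      obtain c where "\<sigma> - r = {c}" using triangle_minus_edge[OF \<sigma>(1) True \<sigma>(2)] .
      then show ?thesis by (simp add: image_set_diff[OF inj_swap, symmetric])
    qed
    then show ?thesis
      using triangles_containing_swapped[of r "\<lambda>_. True"]
      by (simp add: sum.reindex[OF inj_swapped])
  qed
  have ends: "(\<Sum>u\<in>swapped r. int (alpha EH EG (swapped ` Dg) (swapped r) u) * (\<phi> \<circ> prod.swap) u)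
      = (\<Sum>u\<in>r. int (alpha EG EH Dg r u) * \<phi> u)"
    by (simp add: sum.reindex[OF inj_swap] alpha_swapped)
  show ?thesis
    using True apexes ends by (simp add: Div_def tri_edges_swapped)
qed

lemma is_cartier_swapped:
  assumes "is_cartier VG EG VH EH Dg D"
  shows "is_cartier VH EH VG EG (swapped ` Dg) (D \<circ> swapped)"
  unfolding is_cartier_def
proof (intro conjI ballI)
  show "is_divisor VH EH VG EG (swapped ` Dg) (D \<circ> swapped)"
    using assms by (simp add: is_cartier_def is_divisor_def tri_edges_swapped mem_swapped_image)
  fix v assume "v \<in> tri_vertices VH VG"
  then have "prod.swap v \<in> tri_vertices VG VH" by (auto simp: tri_vertices_def)
  then obtain \<psi> where \<psi>: "\<And>r. r \<in> tri_edges VG EG VH EH Dg \<Longrightarrow> prod.swap v \<in> r \<Longrightarrow>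
      D r = Div VG EG VH EH Dg \<psi> r"
    using assms unfolding is_cartier_def by blast
  show "\<exists>\<psi>. \<forall>r \<in> tri_edges VH EH VG EG (swapped ` Dg). v \<in> r \<longrightarrow>
      (D \<circ> swapped) r = Div VH EH VG EG (swapped ` Dg) \<psi> r"
  proof (intro exI ballI impI)
    fix r assume "r \<in> tri_edges VH EH VG EG (swapped ` Dg)" "v \<in> r"
    then have "swapped r \<in> tri_edges VG EG VH EH Dg" "prod.swap v \<in> swapped r"
      by (auto simp: tri_edges_swapped mem_swapped_image)
    then show "(D \<circ> swapped) r = Div VH EH VG EG (swapped ` Dg) (\<psi> \<circ> prod.swap) r"
      using \<psi> Div_swapped[of \<psi> "swapped r"] by simp
  qed
qed

lemma diagonal_free_representative_if_forest_G:
  assumes D: "is_cartier VG EG VH EH Dg D" and acyclic: "\<not> has_cycle VG EG"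
  shows "\<exists>D' \<phi>. is_cartier VG EG VH EH Dg D' \<and> (\<forall>e\<in>Dg. D' e = 0) \<and>
           (\<forall>r. D' r = D r + Div VG EG VH EH Dg \<phi> r)"
proof -
  interpret T: triangulated_product VH EH VG EG "swapped ` Dg"
    by (rule triangulated_product_swapped)
  obtain D' \<phi> where D': "is_cartier VH EH VG EG (swapped ` Dg) D'"
    and diag: "\<forall>e \<in> swapped ` Dg. D' e = 0"
    and shift: "\<And>r. D' r = (D \<circ> swapped) r + Div VH EH VG EG (swapped ` Dg) \<phi> r"
    using T.diagonal_free_representative_if_forest_H[OF is_cartier_swapped[OF D] acyclic] by blast
  have "is_cartier VG EG VH EH Dg (D' \<circ> swapped)"
    using T.is_cartier_swapped[OF D'] by simp
  moreover have "\<forall>e \<in> Dg. (D' \<circ> swapped) e = 0"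
    using diag by simp
  moreover have "(D' \<circ> swapped) r = D r + Div VG EG VH EH Dg (\<phi> \<circ> prod.swap) r" for r
    using shift[of "swapped r"] Div_swapped[of "\<phi> \<circ> prod.swap" r] by (simp add: comp_assoc)
  ultimately show ?thesis by blast
qed

end

theorem mainTheorem8:
  fixes VG :: "'a set" and EG :: "'a set set" and VH :: "'b set" and EH :: "'b set set"
    and Dg :: "('a \<times> 'b) set set" and D :: "('a \<times> 'b) set \<Rightarrow> int"
  assumes "simple_graph VG EG" and "simple_graph VH EH"
    and "(connected_graph VG EG \<and> tree_graph VH EH) \<or> (tree_graph VG EG \<and> connected_graph VH EH)"
    and "is_triangulation EG EH Dg"
    and "is_cartier VG EG VH EH Dg D"
  shows "\<exists>D' \<phi>. is_cartier VG EG VH EH Dg D' \<and> (\<forall>e\<in>Dg. D' e = 0) \<and>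
           (\<forall>r. D' r = D r + Div VG EG VH EH Dg \<phi> r)"
proof -
  interpret triangulated_product VG EG VH EH Dg
    using assms(1,2,4) by (rule triangulated_product.intro)
  from assms(3) have "\<not> has_cycle VH EH \<or> \<not> has_cycle VG EG"
    unfolding tree_graph_def by blast
  then show ?thesis
    using diagonal_free_representative_if_forest_H[OF assms(5)]
      diagonal_free_representative_if_forest_G[OF assms(5)] by blast
qed

end
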